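(* Let $n \geq 1$ be an integer and consider Nim on the hypercube $Q_{2n}$ in which every edge has weight $1$, with the playing piece $\Delta$ starting at the vertex $\emptyset$. Then the second player $P_2$ has a winning strategy.
   Context: Nim on a graph: two players agree on a finite simple undirected graph $G$ whose edges carry positive integer weights, and a starting vertex on which a playing piece $\Delta$ is placed. Players $P_1$ (who moves first) and $P_2$ alternate. On a turn, the player chooses an edge of positive weight incident with the vertex currently holding $\Delta$, lowers that edge's weight by a positive integer amount, and moves $\Delta$ to the other endpoint of that edge. Edges of weight $0$ are no longer playable. A player who cannot move (no playable edge is incident with $\Delta$) loses. With unit weight, each edge can be traversed at most once in total. The hypercube $Q_m$ has as vertices the subsets $X \subseteq \{1,\dots,m\}$, two vertices being adjacent iff they differ in exactly one element; $\emptyset$ denotes the empty set. *)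

theory Defs
  imports Main
begin

text \<open>The graph is given by its edge set E, a set of 2-element
  vertex sets. A position is a pair (w, v): edge weights w and the vertex v
  holding the playing piece. Weights of non-edges are irrelevant.\<close>

definition nim_move :: "'a set set \<Rightarrow> ('a set \<Rightarrow> nat) \<times> 'a \<Rightarrow> ('a set \<Rightarrow> nat) \<times> 'a \<Rightarrow> bool" where
  "nim_move E s s' \<longleftrightarrow>
     (\<exists>u k. {snd s, u} \<in> E \<and> u \<noteq> snd s \<and> 0 < k \<and> k \<le> fst s {snd s, u} \<and>
            s' = ((fst s)({snd s, u} := fst s {snd s, u} - k), u))"

inductive nim_win :: "'a set set \<Rightarrow> ('a set \<Rightarrow> nat) \<times> 'a \<Rightarrow> bool" for E where
  "nim_move E s s' \<Longrightarrow> (\<forall>s''. nim_move E s' s'' \<longrightarrow> nim_win E s'') \<Longrightarrow> nim_win E s"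

definition nim_second_wins :: "'a set set \<Rightarrow> ('a set \<Rightarrow> nat) \<times> 'a \<Rightarrow> bool" where
  "nim_second_wins E s \<longleftrightarrow> (\<forall>s'. nim_move E s s' \<longrightarrow> nim_win E s')"

definition hypercube_edges :: "nat \<Rightarrow> nat set set set" where
  "hypercube_edges m = {{X, Y} | X Y. X \<subseteq> {1..m} \<and> Y \<subseteq> {1..m} \<and>
                                     card ((X - Y) \<union> (Y - X)) = 1}"

definition unit_weights :: "'a set set \<Rightarrow> 'a set \<Rightarrow> nat" where
  "unit_weights E = (\<lambda>e. if e \<in> E then 1 else 0)"

end

theory Submission
  imports Defs
begin

text \<open>Pair the coordinates as {1,2}, {3,4}, ..., {2n-1,2n} and call a vertex balanced
  if it contains both or neither element of each pair; the start vertex is balanced.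
  Whenever the first player flips a coordinate j from a balanced vertex, the second
  player flips its mate, returning to a balanced vertex. Each vertex u adjacent to a
  balanced vertex has exactly two balanced neighbours, reached by flipping j or its
  mate, and the invariant that these two edges at u always carry equal weight
  guarantees that the mirrored move is available. Since every move lowers the total
  weight, the first player eventually runs out of moves.\<close>

lemma nim_move_weight_less:
  assumes "finite E" "nim_move E s s'"
  shows "(\<Sum>e\<in>E. fst s' e) < (\<Sum>e\<in>E. fst s e)"
proof -
  obtain u k where e: "{snd s, u} \<in> E" and k: "0 < k" "k \<le> fst s {snd s, u}"
    and s': "s' = ((fst s)({snd s, u} := fst s {snd s, u} - k), u)"
    using assms(2) unfolding nim_move_def by blast
  show ?thesis
    by (rule sum_strict_mono_ex1) (use assms(1) e k s' in auto)
qed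

lemma nim_second_wins_if_reply:
  assumes "finite E"
    and reply: "\<And>s s'. P s \<Longrightarrow> nim_move E s s' \<Longrightarrow> \<exists>s''. nim_move E s' s'' \<and> P s''"
    and "P s"
  shows "nim_second_wins E s"
  using \<open>P s\<close>
proof (induction s rule: measure_induct_rule[where f = "\<lambda>s. \<Sum>e\<in>E. fst s e"])
  case (less s)
  show ?case
    unfolding nim_second_wins_def
  proof (intro allI impI)
    fix s' assume move: "nim_move E s s'"
    then obtain s'' where move': "nim_move E s' s''" and "P s''"
      using reply less.prems by blast
    have "(\<Sum>e\<in>E. fst s'' e) < (\<Sum>e\<in>E. fst s e)"
      using nim_move_weight_less[OF \<open>finite E\<close> move']
        nim_move_weight_less[OF \<open>finite E\<close> move] by linarith
    then have "nim_second_wins E s''"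
      using less.IH \<open>P s''\<close> by blast
    then show "nim_win E s'"
      using move' nim_win.intros unfolding nim_second_wins_def by blast
  qed
qed

definition flip :: "'a \<Rightarrow> 'a set \<Rightarrow> 'a set" where
  "flip j X = (if j \<in> X then X - {j} else insert j X)"

lemma mem_flip: "i \<in> flip j X \<longleftrightarrow> (if i = j then i \<notin> X else i \<in> X)"
  unfolding flip_def by auto

lemma flip_flip [simp]: "flip j (flip j X) = X"
  unfolding flip_def by auto

lemma flip_neq: "flip j X \<noteq> X"
  unfolding flip_def by auto

lemma flip_eq_flip_iff [simp]: "flip j X = flip k X \<longleftrightarrow> j = k"
  unfolding flip_def by (auto split: if_splits)

lemma flip_subset: "X \<subseteq> A \<Longrightarrow> j \<in> A \<Longrightarrow> flip j X \<subseteq> A"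
  unfolding flip_def by auto

lemma sym_diff_eq_singleton_iff: "(X - Y) \<union> (Y - X) = {j} \<longleftrightarrow> Y = flip j X"
proof
  assume "(X - Y) \<union> (Y - X) = {j}"
  then have "j \<in> Y \<longleftrightarrow> j \<notin> X" "\<forall>i. i \<noteq> j \<longrightarrow> (i \<in> Y \<longleftrightarrow> i \<in> X)"
    by blast+
  then show "Y = flip j X"
    by (auto simp: mem_flip split: if_splits)
qed (auto simp: flip_def)

lemma hypercube_edge_iff:
  "{X, Y} \<in> hypercube_edges m \<longleftrightarrow> X \<subseteq> {1..m} \<and> (\<exists>j\<in>{1..m}. Y = flip j X)"
proof
  assume "{X, Y} \<in> hypercube_edges m"
  then have "\<exists>X' Y'. {X, Y} = {X', Y'} \<and> X' \<subseteq> {1..m} \<and> Y' \<subseteq> {1..m} \<and>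
      card ((X' - Y') \<union> (Y' - X')) = 1"
    unfolding hypercube_edges_def mem_Collect_eq .
  then obtain X' Y' where XY: "{X, Y} = {X', Y'}" "X' \<subseteq> {1..m}" "Y' \<subseteq> {1..m}"
    and card: "card ((X' - Y') \<union> (Y' - X')) = 1"
    by (elim exE conjE)
  obtain j where sd: "(X' - Y') \<union> (Y' - X') = {j}"
    using card by (rule card_1_singletonE)
  have "j \<in> X' \<union> Y'"
    using sd by blast
  then have j: "j \<in> {1..m}"
    using XY(2,3) by blast
  have Y': "Y' = flip j X'"
    using sd by (rule sym_diff_eq_singleton_iff[THEN iffD1])
  from XY(1) have "X = X' \<and> Y = Y' \<or> X = Y' \<and> Y = X'"
    by (simp add: doubleton_eq_iff)
  then show "X \<subseteq> {1..m} \<and> (\<exists>j\<in>{1..m}. Y = flip j X)"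
    using XY(2,3) j Y' by (auto intro!: bexI[of _ j])
next
  assume "X \<subseteq> {1..m} \<and> (\<exists>j\<in>{1..m}. Y = flip j X)"
  then obtain j where X: "X \<subseteq> {1..m}" and j: "j \<in> {1..m}" and Y: "Y = flip j X"
    by blast
  have "Y \<subseteq> {1..m}"
    unfolding Y using X j by (rule flip_subset)
  moreover have "card ((X - Y) \<union> (Y - X)) = 1"
    unfolding Y using sym_diff_eq_singleton_iff[of X "flip j X" j] by simp
  ultimately show "{X, Y} \<in> hypercube_edges m"
    unfolding hypercube_edges_def mem_Collect_eq using X by (intro exI[of _ X] exI[of _ Y]) simp
qed

lemma finite_hypercube_edges: "finite (hypercube_edges m)"
proof (rule finite_subset)
  show "hypercube_edges m \<subseteq> Pow (Pow {1..m})"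
    unfolding hypercube_edges_def by auto
qed simp

definition mate :: "nat \<Rightarrow> nat" where
  "mate j = (if odd j then j + 1 else j - 1)"

lemma mate_in_range: "j \<in> {1..2*n} \<Longrightarrow> mate j \<in> {1..2*n}"
  unfolding mate_def by (auto, presburger)

lemma mate_neq: "1 \<le> j \<Longrightarrow> mate j \<noteq> j"
  unfolding mate_def by auto

lemma mate_mate: "1 \<le> j \<Longrightarrow> mate (mate j) = j"
  unfolding mate_def by auto

definition balanced :: "nat \<Rightarrow> nat set \<Rightarrow> bool" where
  "balanced n X \<longleftrightarrow> X \<subseteq> {1..2*n} \<and> (\<forall>j\<in>{1..2*n}. j \<in> X \<longleftrightarrow> mate j \<in> X)"

lemma not_balanced_flip_balanced:
  assumes "balanced n (flip j u)" "j \<in> {1..2*n}"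
  shows "\<not> balanced n u"
proof
  assume "balanced n u"
  then have "j \<in> u \<longleftrightarrow> mate j \<in> u" "j \<in> flip j u \<longleftrightarrow> mate j \<in> flip j u"
    using assms unfolding balanced_def by blast+
  then show False
    using mate_neq[of j] assms(2) by (auto simp: mem_flip)
qed

lemma balanced_flip_mate:
  assumes bal: "balanced n (flip j u)" and j: "j \<in> {1..2*n}"
  shows "balanced n (flip (mate j) u)"
  unfolding balanced_def
proof (intro conjI ballI)
  have "u \<subseteq> {1..2*n}"
    using flip_subset[of "flip j u" _ j] bal j unfolding balanced_def by auto
  then show "flip (mate j) u \<subseteq> {1..2*n}"
    using mate_in_range[OF j] by (rule flip_subset)
next
  fix i assume i: "i \<in> {1..2*n}"
  have "i \<in> flip j u \<longleftrightarrow> mate i \<in> flip j u"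
    using bal i unfolding balanced_def by blast
  moreover have "mate i = j \<longleftrightarrow> i = mate j" "mate i = mate j \<longleftrightarrow> i = j"
    using i j mate_mate by (metis atLeastAtMost_iff)+
  ultimately show "i \<in> flip (mate j) u \<longleftrightarrow> mate i \<in> flip (mate j) u"
    unfolding mem_flip by (simp only: split: if_splits) blast+
qed

lemma half_balanced_edge_eq_iff:
  assumes "balanced n (flip j u)" "j \<in> {1..2*n}"
    and "balanced n (flip j' u')" "j' \<in> {1..2*n}"
  shows "{u, flip j u} = {u', flip j' u'} \<longleftrightarrow> u' = u \<and> j' = j"
  using not_balanced_flip_balanced[OF assms(1,2)] not_balanced_flip_balanced[OF assms(3,4)]
    assms(1,3) by (auto simp: doubleton_eq_iff)

definition mirror_symmetric :: "nat \<Rightarrow> (nat set set \<Rightarrow> nat) \<Rightarrow> bool" where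
  "mirror_symmetric n w \<longleftrightarrow>
     (\<forall>u j. j \<in> {1..2*n} \<and> balanced n (flip j u) \<longrightarrow>
            w {u, flip j u} = w {u, flip (mate j) u})"

lemma mirror_symmetric_unit_weights:
  "mirror_symmetric n (unit_weights (hypercube_edges (2*n)))"
  unfolding mirror_symmetric_def
proof (intro allI impI)
  fix u j assume uj: "j \<in> {1..2*n} \<and> balanced n (flip j u)"
  then have "u \<subseteq> {1..2*n}"
    using flip_subset[of "flip j u" _ j] unfolding balanced_def by auto
  then have "{u, flip j u} \<in> hypercube_edges (2*n)"
    "{u, flip (mate j) u} \<in> hypercube_edges (2*n)"
    using uj mate_in_range by (auto simp: hypercube_edge_iff)
  then show "unit_weights (hypercube_edges (2*n)) {u, flip j u} =
             unit_weights (hypercube_edges (2*n)) {u, flip (mate j) u}"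
    unfolding unit_weights_def by simp
qed

lemma mirror_symmetric_lower_pair:
  assumes sym: "mirror_symmetric n w"
    and bal: "balanced n (flip j u)" and j: "j \<in> {1..2*n}"
  shows "mirror_symmetric n (w({u, flip j u} := w {u, flip j u} - k,
                                {u, flip (mate j) u} := w {u, flip (mate j) u} - k))"
    (is "mirror_symmetric n ?w'")
  unfolding mirror_symmetric_def
proof (intro allI impI)
  fix u' j' assume uj': "j' \<in> {1..2*n} \<and> balanced n (flip j' u')"
  have bal_mate: "balanced n (flip (mate j) u)" "balanced n (flip (mate j') u')"
    using balanced_flip_mate bal j uj' by blast+
  have mates: "mate j \<in> {1..2*n}" "mate j' \<in> {1..2*n}" "mate j \<noteq> j"
    "mate (mate j) = j" "mate (mate j') = j'"
    using mate_in_range mate_neq mate_mate j uj' by auto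
  have eq: "w {u', flip j' u'} = w {u', flip (mate j') u'}"
    using sym uj' unfolding mirror_symmetric_def by blast
  have "{u', flip j' u'} = {u, flip j u} \<longleftrightarrow> u' = u \<and> j' = j"
    "{u', flip j' u'} = {u, flip (mate j) u} \<longleftrightarrow> u' = u \<and> j' = mate j"
    "{u', flip (mate j') u'} = {u, flip j u} \<longleftrightarrow> u' = u \<and> j' = mate j"
    "{u', flip (mate j') u'} = {u, flip (mate j) u} \<longleftrightarrow> u' = u \<and> j' = j"
    using half_balanced_edge_eq_iff[OF _ _ bal j] half_balanced_edge_eq_iff[OF _ _ bal_mate(1)]
      uj' bal_mate(2) mates by metis+
  then show "?w' {u', flip j' u'} = ?w' {u', flip (mate j') u'}"
    using eq sym bal j mates unfolding mirror_symmetric_def by auto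
qed

lemma mirror_reply:
  assumes bal: "balanced n V" and sym: "mirror_symmetric n w"
    and move: "nim_move (hypercube_edges (2*n)) (w, V) s'"
  shows "\<exists>s''. nim_move (hypercube_edges (2*n)) s' s'' \<and>
               balanced n (snd s'') \<and> mirror_symmetric n (fst s'')"
proof -
  let ?E = "hypercube_edges (2*n)"
  obtain u k where edge: "{V, u} \<in> ?E" and k: "0 < k" "k \<le> w {V, u}"
    and s': "s' = (w({V, u} := w {V, u} - k), u)"
    using move unfolding nim_move_def by auto
  obtain j where j: "j \<in> {1..2*n}" and u: "u = flip j V"
    using edge by (auto simp: hypercube_edge_iff)
  have V: "V = flip j u" "balanced n (flip j u)"
    using u bal by simp_all
  define u' where "u' = flip (mate j) u"
  define w' where "w' = w({V, u} := w {V, u} - k, {u, u'} := w {u, u'} - k)"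
  have "V \<noteq> u'"
    using mate_neq[of j] j unfolding V(1) u'_def by (simp add: eq_commute[of j])
  then have distinct: "{V, u} \<noteq> {u, u'}"
    by (auto simp: doubleton_eq_iff)
  have weight: "w {u, u'} = w {V, u}"
    using sym V j unfolding mirror_symmetric_def u'_def by (metis insert_commute)
  have "u \<subseteq> {1..2*n}"
    using edge by (auto simp: insert_commute[of V] hypercube_edge_iff)
  then have "{u, u'} \<in> ?E"
    using mate_in_range[OF j] unfolding u'_def by (auto simp: hypercube_edge_iff)
  moreover have "u' \<noteq> u"
    unfolding u'_def by (rule flip_neq)
  ultimately have "nim_move ?E s' (w', u')"
    unfolding nim_move_def s' w'_def fst_conv snd_conv
    using k weight distinct by (intro exI[of _ u'] exI[of _ k]) simp
  moreover have "balanced n u'"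
    unfolding u'_def by (rule balanced_flip_mate[OF V(2) j])
  moreover have "mirror_symmetric n w'"
    using mirror_symmetric_lower_pair[OF sym V(2) j, of k]
    unfolding w'_def u'_def V(1)[symmetric] by (simp add: insert_commute)
  ultimately show ?thesis by auto
qed

theorem mainTheorem3:
  fixes n :: nat
  assumes "n \<ge> 1"
  shows "nim_second_wins (hypercube_edges (2 * n))
           (unit_weights (hypercube_edges (2 * n)), {})"
proof (rule nim_second_wins_if_reply[where P = "\<lambda>s. balanced n (snd s) \<and> mirror_symmetric n (fst s)"])
  show "finite (hypercube_edges (2 * n))"
    by (rule finite_hypercube_edges)
  show "balanced n (snd (unit_weights (hypercube_edges (2 * n)), {})) \<and>
        mirror_symmetric n (fst (unit_weights (hypercube_edges (2 * n)), {}))"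
    using mirror_symmetric_unit_weights by (simp add: balanced_def)
  show "\<exists>s''. nim_move (hypercube_edges (2 * n)) s' s'' \<and>
              balanced n (snd s'') \<and> mirror_symmetric n (fst s'')"
    if "balanced n (snd s) \<and> mirror_symmetric n (fst s)"
      and "nim_move (hypercube_edges (2 * n)) s s'" for s s'
    using mirror_reply[of n "snd s" "fst s" s'] that by simp
qed

end
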